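(* Let $c>0$, $\alpha>0$ and $g\in C^2(\mathbb{R})$. Let $w(x,t)=\frac{1}{2c}\int_{x-ct}^{x+ct}g(y)\,dy$ be the solution of the wave equation $\frac{\partial^2 w}{\partial t^2}= c^2 \frac{\partial^2 w}{\partial x^2}$ with $w(x,0)=0$, $\frac{\partial w}{\partial t}(x,0)=g(x)$. Define $$v(x,t)=\frac{2}{B(\alpha,\frac12)}\int_0^1(1-u^2)^{\alpha-1}\,w(x,ut)\,du .$$ Then $v$ solves $$\frac{\partial^2 v}{\partial t^2}+\frac{2\alpha}{t}\frac{\partial v}{\partial t}= c^2 \frac{\partial^2 v}{\partial x^2}+\frac{2g(x)}{t\,B(\alpha,\frac12)},\quad t>0,$$ with $v(x,0)=0$ and $\frac{\partial v}{\partial t}(x,0)=\frac{\Gamma(\alpha+\frac12)}{\sqrt{\pi}\,\Gamma(\alpha+1)}\,g(x)$.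
   Context: $B(a,b)=\Gamma(a)\Gamma(b)/\Gamma(a+b)$ denotes the Beta function. *)

theory Defs
  imports "HOL-Analysis.Analysis"
begin

definition C2 :: "(real \<Rightarrow> real) \<Rightarrow> bool" where
  "C2 g \<longleftrightarrow> (\<exists>g' g''. (\<forall>x. (g has_real_derivative g' x) (at x)) \<and>
                        (\<forall>x. (g' has_real_derivative g'' x) (at x)) \<and>
                        continuous_on UNIV g'')"

end

theory Submission
  imports Defs
begin

text \<open>
  Let \<open>G\<close> be an antiderivative of \<open>g\<close> and \<open>\<rho>(u) = (1 - u\<^sup>2)\<^bsup>\<alpha>-1\<^esup>\<close>.  By d'Alembert's
  formula, for \<open>t \<ge> 0\<close>
    \<open>v(x,t) = (M\<^sub>c G(x,t) - M\<^sub>-\<^sub>c G(x,t)) / (c B(\<alpha>,1/2))\<close>, where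
    \<open>M\<^sub>\<kappa> H(x,t) = \<integral>\<^sub>0\<^sup>1 \<rho>(u) H(x + \<kappa> u t) du\<close>.
  The right-hand side is defined for all \<open>t\<close>, so all derivatives may be computed from it.

  The equation then reduces to one integral identity: the combination
  \<open>v\<^sub>t\<^sub>t + (2\<alpha>/t) v\<^sub>t - c\<^sup>2 v\<^sub>x\<^sub>x\<close> is, under the integral, the exact \<open>u\<close>-derivative of
  \<open>-(1 - u\<^sup>2)\<^sup>\<alpha> (g(x + cut) + g(x - cut)) / t\<close>, whose increment over \<open>[0,1]\<close> is \<open>2 g(x) / t\<close>.
  The initial velocity comes from \<open>\<integral>\<^sub>0\<^sup>1 u \<rho>(u) du = 1/(2\<alpha>)\<close> and \<open>\<alpha> B(\<alpha>,1/2) \<Gamma>(\<alpha>+1) = \<surd>\<pi> \<Gamma>(\<alpha>+1/2)\<close>.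
\<close>

text \<open>A continuous function on a compact interval is bounded and measurable, so multiplying by it
  preserves absolute integrability of a weight.\<close>
lemma absolutely_integrable_continuous_mult:
  fixes \<rho> h :: "real \<Rightarrow> real"
  assumes "\<rho> absolutely_integrable_on {a..b}" and "continuous_on {a..b} h"
  shows "(\<lambda>u. h u * \<rho> u) absolutely_integrable_on {a..b}"
  using assms
  by (intro absolutely_integrable_bounded_measurable_product_real)
     (auto intro!: continuous_imp_measurable_on_sets_lebesgue compact_imp_bounded compact_continuous_image)

lemma integrable_continuous_mult:
  fixes \<rho> h :: "real \<Rightarrow> real"
  assumes "\<rho> absolutely_integrable_on {a..b}" and "continuous_on {a..b} h"
  shows "(\<lambda>u. \<rho> u * h u) integrable_on {a..b}"
  using absolutely_integrable_continuous_mult[OF assms]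
  by (simp add: absolutely_integrable_on_def mult.commute)

lemma weighted_integral_bound:
  fixes \<rho> Q :: "real \<Rightarrow> real"
  assumes \<rho>: "\<rho> absolutely_integrable_on S" and Q: "(\<lambda>u. \<rho> u * Q u) integrable_on S"
    and bound: "\<And>u. u \<in> S \<Longrightarrow> \<bar>Q u\<bar> \<le> B"
  shows "\<bar>integral S (\<lambda>u. \<rho> u * Q u)\<bar> \<le> integral S (\<lambda>u. \<bar>\<rho> u\<bar>) * B"
proof -
  have "(\<lambda>u. \<bar>\<rho> u\<bar>) integrable_on S"
    using \<rho> by (simp add: absolutely_integrable_on_def)
  then have "norm (integral S (\<lambda>u. \<rho> u * Q u)) \<le> integral S (\<lambda>u. \<bar>\<rho> u\<bar> * B)"
    by (intro integral_norm_bound_integral Q integrable_on_mult_left)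
       (auto simp: abs_mult bound mult_left_mono)
  then show ?thesis by simp
qed

lemma uniform_linearization:
  fixes F f :: "real \<Rightarrow> real"
  assumes F: "\<And>y. (F has_real_derivative f y) (at y)" and f: "continuous_on UNIV f"
    and e: "e > 0"
  shows "\<exists>d>0. \<forall>z k. \<bar>z\<bar> \<le> N \<longrightarrow> \<bar>k\<bar> < d \<longrightarrow> \<bar>F (z + k) - F z - k * f z\<bar> \<le> e * \<bar>k\<bar>"
proof -
  have "uniformly_continuous_on (cball 0 (N + 1)) f"
    by (rule compact_uniformly_continuous) (auto intro: continuous_on_subset[OF f])
  then obtain d where d: "d > 0" and close: "\<And>x x'. x \<in> cball 0 (N + 1) \<Longrightarrow> x' \<in> cball 0 (N + 1) \<Longrightarrow>
      dist x' x < d \<Longrightarrow> dist (f x') (f x) < e"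
    using e unfolding uniformly_continuous_on_def by metis
  define d' where "d' = min d 1"
  have d': "d' > 0" using d by (simp add: d'_def)
  have "\<bar>F (z + k) - F z - k * f z\<bar> \<le> e * \<bar>k\<bar>" if z: "\<bar>z\<bar> \<le> N" and k: "\<bar>k\<bar> < d'" for z k
  proof -
    \<comment> \<open>Mean value bound for \<open>r \<mapsto> F r - r f(z)\<close>, whose derivative \<open>f r - f z\<close> is small near \<open>z\<close>.\<close>
    have "norm ((\<lambda>r. F r - r * f z) (z + k) - (\<lambda>r. F r - r * f z) z) \<le> e * norm (z + k - z)"
    proof (rule field_differentiable_bound[of "ball z d'"])
      fix r assume r: "r \<in> ball z d'"
      show "((\<lambda>r. F r - r * f z) has_field_derivative (f r - f z)) (at r within ball z d')"
        by (auto intro!: derivative_eq_intros has_field_derivative_at_within[OF F])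
      have "r \<in> cball 0 (N + 1)" "z \<in> cball 0 (N + 1)" "dist r z < d"
        using r z by (auto simp: d'_def dist_real_def)
      then show "norm (f r - f z) \<le> e"
        using close[of z r] by (simp add: dist_real_def)
    qed (use k d' in \<open>auto simp: dist_real_def\<close>)
    then show ?thesis by (simp add: algebra_simps)
  qed
  with d' show ?thesis by blast
qed

lemma weighted_difference_quotient_error:
  fixes \<rho> a b F f :: "real \<Rightarrow> real"
  assumes \<rho>: "\<rho> absolutely_integrable_on {0..1}"
    and a: "continuous_on {0..1} a" and b: "continuous_on {0..1} b"
    and F: "\<And>y. (F has_real_derivative f y) (at y)" and f: "continuous_on UNIV f"
    and h: "h \<noteq> 0"
    and lin: "\<And>u. u \<in> {0..1} \<Longrightarrow>
      \<bar>F (b u + a u * s + a u * h) - F (b u + a u * s) - a u * h * f (b u + a u * s)\<bar> \<le> \<eta> * \<bar>h\<bar>"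
  shows "\<bar>(integral {0..1} (\<lambda>u. \<rho> u * F (b u + a u * (s + h)))
            - integral {0..1} (\<lambda>u. \<rho> u * F (b u + a u * s))) / h
          - integral {0..1} (\<lambda>u. a u * \<rho> u * f (b u + a u * s))\<bar>
         \<le> integral {0..1} (\<lambda>u. \<bar>\<rho> u\<bar>) * \<eta>"
proof -
  have F_cont: "continuous_on UNIV F"
    using F by (meson DERIV_isCont continuous_at_imp_continuous_on)
  have \<Phi>: "((\<lambda>u. \<rho> u * F (b u + a u * y)) has_integral integral {0..1} (\<lambda>u. \<rho> u * F (b u + a u * y))) {0..1}" for y
    by (intro integrable_integral integrable_continuous_mult[OF \<rho>])
       (auto intro!: continuous_intros a b continuous_on_compose2[OF F_cont])
  have "(\<lambda>u. \<rho> u * (a u * f (b u + a u * s))) integrable_on {0..1}"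
    by (intro integrable_continuous_mult[OF \<rho>])
       (auto intro!: continuous_intros a b continuous_on_compose2[OF f])
  then have D: "((\<lambda>u. a u * \<rho> u * f (b u + a u * s)) has_integral
                   integral {0..1} (\<lambda>u. a u * \<rho> u * f (b u + a u * s))) {0..1}"
    by (intro integrable_integral) (simp add: ac_simps)
  define Q where "Q u = (F (b u + a u * s + a u * h) - F (b u + a u * s) - a u * h * f (b u + a u * s)) / h" for u
  have "(\<rho> u * F (b u + a u * (s + h)) - \<rho> u * F (b u + a u * s)) / h - a u * \<rho> u * f (b u + a u * s)
          = \<rho> u * Q u" for u
    using h by (simp add: Q_def field_simps)
  with has_integral_diff[OF has_integral_divide[OF has_integral_diff[OF \<Phi>[of "s + h"] \<Phi>[of s]], where c=h] D]
  have Q: "((\<lambda>u. \<rho> u * Q u) has_integral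
             (integral {0..1} (\<lambda>u. \<rho> u * F (b u + a u * (s + h)))
               - integral {0..1} (\<lambda>u. \<rho> u * F (b u + a u * s))) / h
             - integral {0..1} (\<lambda>u. a u * \<rho> u * f (b u + a u * s))) {0..1}"
    by simp
  have "\<bar>Q u\<bar> \<le> \<eta>" if "u \<in> {0..1}" for u
    using lin[OF that] h by (simp add: Q_def abs_divide divide_le_eq)
  from weighted_integral_bound[OF \<rho> has_integral_integrable[OF Q] this]
  show ?thesis by (simp add: integral_unique[OF Q])
qed

lemma has_real_derivative_weighted_integral:
  fixes \<rho> a b F f :: "real \<Rightarrow> real"
  assumes \<rho>: "\<rho> absolutely_integrable_on {0..1}"
    and a: "continuous_on {0..1} a" and b: "continuous_on {0..1} b"
    and F: "\<And>y. (F has_real_derivative f y) (at y)" and f: "continuous_on UNIV f"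
  shows "((\<lambda>s. integral {0..1} (\<lambda>u. \<rho> u * F (b u + a u * s))) has_real_derivative
          integral {0..1} (\<lambda>u. a u * \<rho> u * f (b u + a u * s))) (at s)"
proof -
  define \<Phi> where "\<Phi> y = integral {0..1} (\<lambda>u. \<rho> u * F (b u + a u * y))" for y
  define D where "D = integral {0..1} (\<lambda>u. a u * \<rho> u * f (b u + a u * s))"
  obtain M where M: "M > 0" "\<And>u. u \<in> {0..1} \<Longrightarrow> \<bar>a u\<bar> \<le> M"
    using compact_imp_bounded[OF compact_continuous_image[OF a compact_Icc]]
    unfolding bounded_pos by auto
  have "continuous_on {0..1} (\<lambda>u. b u + a u * s)"
    by (auto intro!: continuous_intros a b)
  from compact_imp_bounded[OF compact_continuous_image[OF this compact_Icc]]
  obtain N where N: "\<And>u. u \<in> {0..1} \<Longrightarrow> \<bar>b u + a u * s\<bar> \<le> N"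
    unfolding bounded_pos by force
  define P where "P = integral {0..1} (\<lambda>u. \<bar>\<rho> u\<bar>) + 1"
  have "integral {0..1} (\<lambda>u. \<bar>\<rho> u\<bar>) \<ge> 0"
    using \<rho> by (intro integral_nonneg) (auto simp: absolutely_integrable_on_def)
  then have P: "P > 0" by (simp add: P_def)
  show ?thesis
    unfolding has_field_derivative_iff \<Phi>_def[symmetric] D_def[symmetric]
  proof (rule tendstoI)
    fix e :: real assume e: "e > 0"
    define e' where "e' = e / (2 * M * P)"
    have e': "e' > 0" using e M P by (simp add: e'_def)
    obtain d where d: "d > 0" and lin: "\<And>z k. \<bar>z\<bar> \<le> N \<Longrightarrow> \<bar>k\<bar> < d \<Longrightarrow>
        \<bar>F (z + k) - F z - k * f z\<bar> \<le> e' * \<bar>k\<bar>"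
      using uniform_linearization[OF F f e', of N] by blast
    have "dist ((\<Phi> y - \<Phi> s) / (y - s)) D < e" if y: "y \<noteq> s" "\<bar>y - s\<bar> < d / M" for y
    proof -
      define h where "h = y - s"
      have h: "h \<noteq> 0" "M * \<bar>h\<bar> < d" using y M by (auto simp: h_def field_simps)
      have "\<bar>F (b u + a u * s + a u * h) - F (b u + a u * s) - a u * h * f (b u + a u * s)\<bar>
              \<le> (e' * M) * \<bar>h\<bar>" if u: "u \<in> {0..1}" for u
      proof -
        have k: "\<bar>a u * h\<bar> \<le> M * \<bar>h\<bar>"
          using M(2)[OF u] by (simp add: abs_mult mult_right_mono)
        then have "\<bar>a u * h\<bar> < d" using h(2) by linarith
        from lin[OF N[OF u] this]
        have "\<bar>F (b u + a u * s + a u * h) - F (b u + a u * s) - a u * h * f (b u + a u * s)\<bar> \<le> e' * \<bar>a u * h\<bar>" .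
        also have "\<dots> \<le> (e' * M) * \<bar>h\<bar>"
          using k e' by (simp add: mult_left_mono mult.assoc)
        finally show ?thesis .
      qed
      from weighted_difference_quotient_error[OF \<rho> a b F f h(1) this]
      have "\<bar>(\<Phi> y - \<Phi> s) / h - D\<bar> \<le> integral {0..1} (\<lambda>u. \<bar>\<rho> u\<bar>) * (e' * M)"
        by (simp add: \<Phi>_def D_def h_def)
      also have "\<dots> < P * (e' * M)"
        using e' M by (simp add: P_def)
      also have "\<dots> = e / 2"
        using M P by (simp add: e'_def)
      finally show ?thesis
        using e by (simp add: dist_real_def h_def)
    qed
    moreover have "d / M > 0" using d M by simp
    ultimately show "\<forall>\<^sub>F y in at s. dist ((\<Phi> y - \<Phi> s) / (y - s)) D < e"
      unfolding eventually_at by (auto simp: dist_real_def)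
  qed
qed

text \<open>The kernel \<open>(1 - u\<^sup>2)\<^bsup>\<alpha>-1\<^esup>\<close> of the transform; it is singular at \<open>u = 1\<close> when \<open>\<alpha> < 1\<close>.\<close>
definition euler_kernel :: "real \<Rightarrow> real \<Rightarrow> real" where
  "euler_kernel \<alpha> u = (1 - u\<^sup>2) powr (\<alpha> - 1)"

text \<open>Integrability of the kernel, from that of the Beta integrand \<open>(1 - u)\<^bsup>\<alpha>-1\<^esup>\<close>.\<close>
lemma euler_kernel_absolutely_integrable:
  assumes "\<alpha> > 0"
  shows "euler_kernel \<alpha> absolutely_integrable_on {0..1}"
proof -
  have "(\<lambda>u. u powr (1 - 1) * (1 - u) powr (\<alpha> - 1)) integrable_on {0..1}"
    using assms by (intro integrable_Beta') auto
  then have "(\<lambda>u. (1 - u) powr (\<alpha> - 1)) integrable_on {0..1}"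
    by (rule integrable_spike_finite[of "{0}", rotated 2]) auto
  then have "(\<lambda>u. (1 - u) powr (\<alpha> - 1)) absolutely_integrable_on {0..1}"
    by (rule nonnegative_absolutely_integrable_1) auto
  then have "(\<lambda>u. (1 + u) powr (\<alpha> - 1) * (1 - u) powr (\<alpha> - 1)) absolutely_integrable_on {0..1}"
    by (rule absolutely_integrable_continuous_mult) (auto intro!: continuous_intros)
  moreover have "(1 + u) powr (\<alpha> - 1) * (1 - u) powr (\<alpha> - 1) = euler_kernel \<alpha> u" for u
    by (simp add: euler_kernel_def powr_mult[symmetric] power2_eq_square algebra_simps)
  ultimately show ?thesis by simp
qed

lemma has_real_derivative_kernel_power:
  assumes "\<bar>u\<bar> < 1"
  shows "((\<lambda>u. (1 - u\<^sup>2) powr \<alpha>) has_real_derivative - 2 * \<alpha> * u * euler_kernel \<alpha> u) (at u)"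
proof -
  have "1 - u\<^sup>2 > 0" using assms by (simp add: abs_square_less_1)
  have "((\<lambda>u. (1 - u\<^sup>2) powr \<alpha>) has_real_derivative \<alpha> * (1 - u\<^sup>2) powr (\<alpha> - 1) * (- (2 * u))) (at u)"
    by (rule DERIV_chain2[where g="\<lambda>u. 1 - u\<^sup>2", OF has_real_derivative_powr[OF \<open>1 - u\<^sup>2 > 0\<close>]])
       (auto intro!: derivative_eq_intros)
  then show ?thesis by (simp add: euler_kernel_def algebra_simps)
qed

lemma continuous_on_kernel_power:
  assumes "\<alpha> > 0"
  shows "continuous_on {0..1} (\<lambda>u::real. (1 - u\<^sup>2) powr \<alpha>)"
  using assms by (intro continuous_intros continuous_on_powr') (auto simp: abs_square_le_1)

lemma euler_kernel_first_moment:
  assumes "\<alpha> > 0"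
  shows "((\<lambda>u. u * euler_kernel \<alpha> u) has_integral 1 / (2 * \<alpha>)) {0..1}"
proof -
  define P where "P u = - ((1 - u\<^sup>2) powr \<alpha>) / (2 * \<alpha>)" for u :: real
  have "((\<lambda>u. u * euler_kernel \<alpha> u) has_integral P 1 - P 0) {0..1}"
  proof (rule fundamental_theorem_of_calculus_interior)
    show "continuous_on {0..1} P"
      unfolding P_def
      by (intro continuous_on_divide continuous_on_minus continuous_on_const continuous_on_kernel_power)
         (use assms in auto)
    fix u :: real assume "u \<in> {0<..<1}"
    then have "\<bar>u\<bar> < 1" by simp
    from DERIV_cdivide[OF DERIV_minus[OF has_real_derivative_kernel_power[OF this, of \<alpha>]], of "2 * \<alpha>"]
    have "(P has_real_derivative u * euler_kernel \<alpha> u) (at u)"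
      unfolding P_def[abs_def] using assms by simp
    then show "(P has_vector_derivative u * euler_kernel \<alpha> u) (at u)"
      by (simp add: has_real_derivative_iff_has_vector_derivative)
  qed simp
  moreover have "P 1 - P 0 = 1 / (2 * \<alpha>)" using assms by (simp add: P_def)
  ultimately show ?thesis by simp
qed

definition weighted_mean :: "(real \<Rightarrow> real) \<Rightarrow> (real \<Rightarrow> real) \<Rightarrow> real \<Rightarrow> real \<Rightarrow> real \<Rightarrow> real" where
  "weighted_mean \<rho> H \<kappa> x t = integral {0..1} (\<lambda>u. \<rho> u * H (x + \<kappa> * u * t))"

lemma weighted_mean_has_integral:
  assumes "\<rho> absolutely_integrable_on {0..1}" and "continuous_on UNIV h"
  shows "((\<lambda>u. \<rho> u * h (x + \<kappa> * u * t)) has_integral weighted_mean \<rho> h \<kappa> x t) {0..1}"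
  unfolding weighted_mean_def
  by (intro integrable_integral integrable_continuous_mult assms)
     (auto intro!: continuous_intros continuous_on_compose2[OF assms(2)])

lemma weighted_mean_deriv_time:
  assumes "\<rho> absolutely_integrable_on {0..1}"
    and "\<And>y. (H has_real_derivative h y) (at y)" and "continuous_on UNIV h"
  shows "((\<lambda>t. weighted_mean \<rho> H \<kappa> x t) has_real_derivative
           \<kappa> * weighted_mean (\<lambda>u. u * \<rho> u) h \<kappa> x t) (at t)"
  using has_real_derivative_weighted_integral[OF assms(1) _ _ assms(2,3), of "\<lambda>u. \<kappa> * u" "\<lambda>u. x"]
  by (simp add: weighted_mean_def mult.assoc)

lemma weighted_mean_deriv_space:
  assumes "\<rho> absolutely_integrable_on {0..1}"
    and "\<And>y. (H has_real_derivative h y) (at y)" and "continuous_on UNIV h"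
  shows "((\<lambda>x. weighted_mean \<rho> H \<kappa> x t) has_real_derivative weighted_mean \<rho> h \<kappa> x t) (at x)"
proof -
  have "continuous_on {0..1} (\<lambda>u. \<kappa> * u * t)" by (intro continuous_intros)
  from has_real_derivative_weighted_integral[OF assms(1) continuous_on_const[of _ 1] this assms(2,3), of x]
  show ?thesis by (simp add: weighted_mean_def add.commute)
qed

definition odd_mean :: "real \<Rightarrow> (real \<Rightarrow> real) \<Rightarrow> (real \<Rightarrow> real) \<Rightarrow> real \<Rightarrow> real \<Rightarrow> real" where
  "odd_mean c \<rho> H x t = weighted_mean \<rho> H c x t - weighted_mean \<rho> H (- c) x t"

definition even_mean :: "real \<Rightarrow> (real \<Rightarrow> real) \<Rightarrow> (real \<Rightarrow> real) \<Rightarrow> real \<Rightarrow> real \<Rightarrow> real" where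
  "even_mean c \<rho> H x t = weighted_mean \<rho> H c x t + weighted_mean \<rho> H (- c) x t"

lemma odd_mean_deriv_time:
  assumes "\<rho> absolutely_integrable_on {0..1}"
    and "\<And>y. (H has_real_derivative h y) (at y)" and "continuous_on UNIV h"
  shows "((\<lambda>t. odd_mean c \<rho> H x t) has_real_derivative c * even_mean c (\<lambda>u. u * \<rho> u) h x t) (at t)"
  unfolding odd_mean_def even_mean_def
  by (rule DERIV_cong[OF DERIV_diff[OF weighted_mean_deriv_time[OF assms] weighted_mean_deriv_time[OF assms]]])
     (simp add: algebra_simps)

lemma even_mean_deriv_time:
  assumes "\<rho> absolutely_integrable_on {0..1}"
    and "\<And>y. (H has_real_derivative h y) (at y)" and "continuous_on UNIV h"
  shows "((\<lambda>t. even_mean c \<rho> H x t) has_real_derivative c * odd_mean c (\<lambda>u. u * \<rho> u) h x t) (at t)"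
  unfolding odd_mean_def even_mean_def
  by (rule DERIV_cong[OF DERIV_add[OF weighted_mean_deriv_time[OF assms] weighted_mean_deriv_time[OF assms]]])
     (simp add: algebra_simps)

lemma odd_mean_deriv_space:
  assumes "\<rho> absolutely_integrable_on {0..1}"
    and "\<And>y. (H has_real_derivative h y) (at y)" and "continuous_on UNIV h"
  shows "((\<lambda>x. odd_mean c \<rho> H x t) has_real_derivative odd_mean c \<rho> h x t) (at x)"
  unfolding odd_mean_def
  by (intro DERIV_diff weighted_mean_deriv_space assms)

text \<open>The central identity: the Euler--Poisson--Darboux operator applied to the transform leaves
  only a boundary term, since its integrand is an exact derivative in \<open>u\<close>.\<close>
lemma euler_kernel_identity:
  fixes g g' :: "real \<Rightarrow> real"
  assumes \<alpha>: "\<alpha> > 0" and t: "t \<noteq> 0"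
    and g': "\<And>y. (g has_real_derivative g' y) (at y)" and g'_cont: "continuous_on UNIV g'"
  shows "c * odd_mean c (\<lambda>u. u * (u * euler_kernel \<alpha> u)) g' x t
           + 2 * \<alpha> / t * even_mean c (\<lambda>u. u * euler_kernel \<alpha> u) g x t
           - c * odd_mean c (euler_kernel \<alpha>) g' x t
         = 2 * g x / t"
proof -
  define \<rho> where "\<rho> = euler_kernel \<alpha>"
  have \<rho>: "\<rho> absolutely_integrable_on {0..1}"
    unfolding \<rho>_def using euler_kernel_absolutely_integrable[OF \<alpha>] .
  have \<rho>1: "(\<lambda>u. u * \<rho> u) absolutely_integrable_on {0..1}"
    by (intro absolutely_integrable_continuous_mult \<rho> continuous_intros)
  have \<rho>2: "(\<lambda>u. u * (u * \<rho> u)) absolutely_integrable_on {0..1}"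
    by (intro absolutely_integrable_continuous_mult \<rho>1 continuous_intros)
  have g_cont: "continuous_on UNIV g"
    using g' by (meson DERIV_isCont continuous_at_imp_continuous_on)
  define E where "E u =
      c * (u * (u * \<rho> u) * g' (x + c * u * t) - u * (u * \<rho> u) * g' (x + - c * u * t))
    + 2 * \<alpha> / t * (u * \<rho> u * g (x + c * u * t) + u * \<rho> u * g (x + - c * u * t))
    - c * (\<rho> u * g' (x + c * u * t) - \<rho> u * g' (x + - c * u * t))" for u
  have "(E has_integral
      c * odd_mean c (\<lambda>u. u * (u * \<rho> u)) g' x t + 2 * \<alpha> / t * even_mean c (\<lambda>u. u * \<rho> u) g x t
      - c * odd_mean c \<rho> g' x t) {0..1}"
    unfolding E_def[abs_def] odd_mean_def even_mean_def
    by (intro has_integral_diff has_integral_add has_integral_mult_right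
          weighted_mean_has_integral \<rho> \<rho>1 \<rho>2 g_cont g'_cont)
  moreover define P where "P u = - ((1 - u\<^sup>2) powr \<alpha> * (g (x + c * u * t) + g (x + - c * u * t))) / t" for u
  have "(E has_integral P 1 - P 0) {0..1}"
  proof (rule fundamental_theorem_of_calculus_interior)
    show "continuous_on {0..1} P"
      unfolding P_def using \<alpha> t
      by (intro continuous_intros continuous_on_powr' continuous_on_compose2[OF g_cont])
         (auto simp: abs_square_le_1)
    fix u :: real assume u: "u \<in> {0<..<1}"
    then have "\<bar>u\<bar> < 1" by simp
    have "((\<lambda>u. g (x + c * u * t)) has_real_derivative g' (x + c * u * t) * (c * t)) (at u)"
         "((\<lambda>u. g (x + - c * u * t)) has_real_derivative g' (x + - c * u * t) * (- c * t)) (at u)"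
      by (rule DERIV_chain2[OF g']; auto intro!: derivative_eq_intros)+
    from DERIV_cdivide[OF DERIV_minus[OF DERIV_mult[OF
          has_real_derivative_kernel_power[OF \<open>\<bar>u\<bar> < 1\<close>, of \<alpha>] DERIV_add[OF this]]], of t]
    have "(P has_real_derivative - ((- 2 * \<alpha> * u * \<rho> u) * (g (x + c * u * t) + g (x + - c * u * t))
        + (g' (x + c * u * t) * (c * t) + g' (x + - c * u * t) * (- c * t)) * (1 - u\<^sup>2) powr \<alpha>) / t) (at u)"
      unfolding P_def[abs_def] \<rho>_def .
    moreover have "(1 - u\<^sup>2) powr \<alpha> = (1 - u\<^sup>2) * \<rho> u"
    proof -
      have "1 - u\<^sup>2 > 0" using \<open>\<bar>u\<bar> < 1\<close> by (simp add: abs_square_less_1)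
      then show ?thesis by (simp add: \<rho>_def euler_kernel_def powr_diff)
    qed
    ultimately have "(P has_real_derivative - ((- 2 * \<alpha> * u * \<rho> u) * (g (x + c * u * t) + g (x + - c * u * t))
        + (g' (x + c * u * t) * (c * t) + g' (x + - c * u * t) * (- c * t)) * ((1 - u\<^sup>2) * \<rho> u)) / t) (at u)"
      by simp
    moreover have "- ((- 2 * \<alpha> * u * \<rho> u) * (g (x + c * u * t) + g (x + - c * u * t))
        + (g' (x + c * u * t) * (c * t) + g' (x + - c * u * t) * (- c * t)) * ((1 - u\<^sup>2) * \<rho> u)) / t = E u"
      using t by (simp add: E_def field_simps power2_eq_square)
    ultimately have "(P has_real_derivative E u) (at u)"
      by simp
    then show "(P has_vector_derivative E u) (at u)"
      by (simp add: has_real_derivative_iff_has_vector_derivative)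
  qed simp
  moreover have "P 1 - P 0 = 2 * g x / t"
    using \<alpha> by (simp add: P_def)
  ultimately show ?thesis
    unfolding \<rho>_def by (metis has_integral_unique)
qed

text \<open>The regularity actually used: \<open>g\<close> is \<open>C\<^sup>1\<close> and has a global antiderivative.\<close>
lemma C2_first_derivative:
  assumes "C2 g"
  shows "\<exists>g'. (\<forall>y. (g has_real_derivative g' y) (at y)) \<and> continuous_on UNIV g'"
  using assms unfolding C2_def by (meson DERIV_isCont continuous_at_imp_continuous_on)

lemma continuous_antiderivative:
  fixes g :: "real \<Rightarrow> real"
  assumes "continuous_on UNIV g"
  shows "\<exists>G. \<forall>y. (G has_real_derivative g y) (at y)"
proof -
  have "\<exists>G. \<forall>y::real. -\<infinity> < ereal y \<longrightarrow> ereal y < \<infinity> \<longrightarrow> (G has_vector_derivative g y) (at y)"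
    by (rule einterval_antiderivative) (use assms in \<open>auto simp: continuous_on_eq_continuous_at\<close>)
  then show ?thesis by (auto simp: has_real_derivative_iff_has_vector_derivative)
qed

definition epd_solution :: "real \<Rightarrow> real \<Rightarrow> (real \<Rightarrow> real) \<Rightarrow> real \<Rightarrow> real \<Rightarrow> real" where
  "epd_solution \<alpha> c G x t = odd_mean c (euler_kernel \<alpha>) G x t / (c * Beta \<alpha> (1/2))"

lemma epd_representation:
  fixes w v :: "real \<Rightarrow> real \<Rightarrow> real"
  assumes c: "c > 0" and \<alpha>: "\<alpha> > 0" and G: "\<And>y. (G has_real_derivative g y) (at y)"
    and w_def: "\<And>x t. w x t = 1 / (2 * c) * integral {x - c * t .. x + c * t} g"
    and v_def: "\<And>x t. v x t = 2 / Beta \<alpha> (1/2) *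
                   integral {0..1} (\<lambda>u. (1 - u\<^sup>2) powr (\<alpha> - 1) * w x (u * t))"
    and t: "t \<ge> 0"
  shows "v x t = epd_solution \<alpha> c G x t"
proof -
  define \<rho> where "\<rho> = euler_kernel \<alpha>"
  have G_cont: "continuous_on UNIV G"
    using G by (meson DERIV_isCont continuous_at_imp_continuous_on)
  have w_eq: "(1 - u\<^sup>2) powr (\<alpha> - 1) * w x (u * t)
               = (\<rho> u * G (x + c * u * t) - \<rho> u * G (x + - c * u * t)) / (2 * c)"
    if "u \<in> {0..1}" for u
  proof -
    have "x - c * (u * t) \<le> x + c * (u * t)" using that c t by simp
    then have "(g has_integral G (x + c * (u * t)) - G (x - c * (u * t))) {x - c * (u * t) .. x + c * (u * t)}"
      by (intro fundamental_theorem_of_calculus)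
         (auto simp: has_real_derivative_iff_has_vector_derivative[symmetric]
               intro: has_field_derivative_at_within[OF G])
    then show ?thesis
      using c by (simp add: w_def integral_unique \<rho>_def euler_kernel_def field_simps)
  qed
  have "((\<lambda>u. (\<rho> u * G (x + c * u * t) - \<rho> u * G (x + - c * u * t)) / (2 * c))
          has_integral odd_mean c \<rho> G x t / (2 * c)) {0..1}"
    unfolding odd_mean_def \<rho>_def
    by (intro has_integral_divide has_integral_diff weighted_mean_has_integral G_cont
          euler_kernel_absolutely_integrable \<alpha>)
  then have "integral {0..1} (\<lambda>u. (1 - u\<^sup>2) powr (\<alpha> - 1) * w x (u * t)) = odd_mean c \<rho> G x t / (2 * c)"
    by (intro integral_unique) (rule has_integral_eq[OF w_eq[symmetric]])
  then show ?thesis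
    using c by (simp add: v_def epd_solution_def \<rho>_def)
qed

lemma epd_solution_derivatives:
  fixes g g' :: "real \<Rightarrow> real"
  assumes \<alpha>: "\<alpha> > 0" and c: "c \<noteq> 0" and G: "\<And>y. (G has_real_derivative g y) (at y)"
    and g': "\<And>y. (g has_real_derivative g' y) (at y)" and g'_cont: "continuous_on UNIV g'"
  shows "((\<lambda>t. epd_solution \<alpha> c G x t) has_real_derivative
            even_mean c (\<lambda>u. u * euler_kernel \<alpha> u) g x t / Beta \<alpha> (1/2)) (at t)"
    and "((\<lambda>t. even_mean c (\<lambda>u. u * euler_kernel \<alpha> u) g x t / Beta \<alpha> (1/2)) has_real_derivative
            c * odd_mean c (\<lambda>u. u * (u * euler_kernel \<alpha> u)) g' x t / Beta \<alpha> (1/2)) (at t)"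
    and "((\<lambda>x. epd_solution \<alpha> c G x t) has_real_derivative
            odd_mean c (euler_kernel \<alpha>) g x t / (c * Beta \<alpha> (1/2))) (at x)"
    and "((\<lambda>x. odd_mean c (euler_kernel \<alpha>) g x t / (c * Beta \<alpha> (1/2))) has_real_derivative
            odd_mean c (euler_kernel \<alpha>) g' x t / (c * Beta \<alpha> (1/2))) (at x)"
proof -
  have \<rho>: "euler_kernel \<alpha> absolutely_integrable_on {0..1}"
    using euler_kernel_absolutely_integrable[OF \<alpha>] .
  have \<rho>1: "(\<lambda>u. u * euler_kernel \<alpha> u) absolutely_integrable_on {0..1}"
    by (intro absolutely_integrable_continuous_mult \<rho> continuous_intros)
  have g_cont: "continuous_on UNIV g"
    using g' by (meson DERIV_isCont continuous_at_imp_continuous_on)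
  show "((\<lambda>t. epd_solution \<alpha> c G x t) has_real_derivative
            even_mean c (\<lambda>u. u * euler_kernel \<alpha> u) g x t / Beta \<alpha> (1/2)) (at t)"
  proof -
    have "((\<lambda>t. odd_mean c (euler_kernel \<alpha>) G x t) has_real_derivative
            c * even_mean c (\<lambda>u. u * euler_kernel \<alpha> u) g x t) (at t)"
      by (rule odd_mean_deriv_time[OF \<rho> G g_cont])
    from DERIV_cdivide[OF this, of "c * Beta \<alpha> (1/2)"] show ?thesis
      using c unfolding epd_solution_def by simp
  qed
  show "((\<lambda>t. even_mean c (\<lambda>u. u * euler_kernel \<alpha> u) g x t / Beta \<alpha> (1/2)) has_real_derivative
            c * odd_mean c (\<lambda>u. u * (u * euler_kernel \<alpha> u)) g' x t / Beta \<alpha> (1/2)) (at t)"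
    by (intro DERIV_cdivide even_mean_deriv_time \<rho>1 g' g'_cont)
  show "((\<lambda>x. epd_solution \<alpha> c G x t) has_real_derivative
            odd_mean c (euler_kernel \<alpha>) g x t / (c * Beta \<alpha> (1/2))) (at x)"
    unfolding epd_solution_def by (intro DERIV_cdivide odd_mean_deriv_space \<rho> G g_cont)
  show "((\<lambda>x. odd_mean c (euler_kernel \<alpha>) g x t / (c * Beta \<alpha> (1/2))) has_real_derivative
            odd_mean c (euler_kernel \<alpha>) g' x t / (c * Beta \<alpha> (1/2))) (at x)"
    by (intro DERIV_cdivide odd_mean_deriv_space \<rho> g' g'_cont)
qed

lemma epd_solution_equation:
  fixes g g' :: "real \<Rightarrow> real"
  assumes \<alpha>: "\<alpha> > 0" and c: "c \<noteq> 0" and t: "t \<noteq> 0"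
    and g': "\<And>y. (g has_real_derivative g' y) (at y)" and g'_cont: "continuous_on UNIV g'"
  shows "c * odd_mean c (\<lambda>u. u * (u * euler_kernel \<alpha> u)) g' x t / Beta \<alpha> (1/2)
           + 2 * \<alpha> / t * (even_mean c (\<lambda>u. u * euler_kernel \<alpha> u) g x t / Beta \<alpha> (1/2))
         = c\<^sup>2 * (odd_mean c (euler_kernel \<alpha>) g' x t / (c * Beta \<alpha> (1/2))) + 2 * g x / (t * Beta \<alpha> (1/2))"
proof -
  have "Beta \<alpha> (1/2) > 0" using \<alpha> by (simp add: Beta_def)
  moreover have "(c * odd_mean c (\<lambda>u. u * (u * euler_kernel \<alpha> u)) g' x t
           + 2 * \<alpha> / t * even_mean c (\<lambda>u. u * euler_kernel \<alpha> u) g x t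
           - c * odd_mean c (euler_kernel \<alpha>) g' x t) / Beta \<alpha> (1/2)
         = 2 * g x / t / Beta \<alpha> (1/2)"
    using euler_kernel_identity[OF \<alpha> t g' g'_cont] by simp
  ultimately show ?thesis
    using c by (simp add: field_simps power2_eq_square)
qed

lemma inverse_alpha_beta_half:
  assumes "\<alpha> > 0"
  shows "1 / (\<alpha> * Beta \<alpha> (1/2)) = Gamma (\<alpha> + 1/2) / (sqrt pi * Gamma (\<alpha> + 1))"
proof -
  have "\<alpha> \<notin> \<int>\<^sub>\<le>\<^sub>0" using assms nonpos_Ints_nonpos by fastforce
  then have "Gamma (\<alpha> + 1) = \<alpha> * Gamma \<alpha>" by (rule Gamma_plus1)
  moreover have "Gamma \<alpha> > 0" "Gamma (\<alpha> + 1/2) > 0" using assms by auto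
  ultimately show ?thesis
    using assms by (simp add: Beta_def Gamma_one_half_real field_simps)
qed

lemma epd_initial_velocity:
  assumes \<alpha>: "\<alpha> > 0"
  shows "even_mean c (\<lambda>u. u * euler_kernel \<alpha> u) g x 0 / Beta \<alpha> (1/2)
           = Gamma (\<alpha> + 1/2) / (sqrt pi * Gamma (\<alpha> + 1)) * g x"
proof -
  have "weighted_mean (\<lambda>u. u * euler_kernel \<alpha> u) g \<kappa> x 0 = 1 / (2 * \<alpha>) * g x" for \<kappa>
    using integral_unique[OF has_integral_mult_left[OF euler_kernel_first_moment[OF \<alpha>], of "g x"]]
    by (simp add: weighted_mean_def)
  then have "even_mean c (\<lambda>u. u * euler_kernel \<alpha> u) g x 0 / Beta \<alpha> (1/2) = 1 / (\<alpha> * Beta \<alpha> (1/2)) * g x"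
    by (simp add: even_mean_def)
  then show ?thesis
    unfolding inverse_alpha_beta_half[OF \<alpha>] .
qed

lemma derivatives_of_agreeing_function:
  fixes v V V\<^sub>t V\<^sub>t\<^sub>t V\<^sub>x V\<^sub>x\<^sub>x :: "real \<Rightarrow> real \<Rightarrow> real"
  assumes agree: "\<And>x t. t \<ge> 0 \<Longrightarrow> v x t = V x t"
    and V\<^sub>t: "\<And>x t. ((\<lambda>t. V x t) has_real_derivative V\<^sub>t x t) (at t)"
    and V\<^sub>t\<^sub>t: "\<And>x t. ((\<lambda>t. V\<^sub>t x t) has_real_derivative V\<^sub>t\<^sub>t x t) (at t)"
    and V\<^sub>x: "\<And>x t. ((\<lambda>x. V x t) has_real_derivative V\<^sub>x x t) (at x)"
    and V\<^sub>x\<^sub>x: "\<And>x t. ((\<lambda>x. V\<^sub>x x t) has_real_derivative V\<^sub>x\<^sub>x x t) (at x)"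
    and t: "t > 0"
  shows "(\<lambda>s. v x s) differentiable at t \<and> (\<lambda>s. deriv (\<lambda>r. v x r) s) differentiable at t
       \<and> (\<lambda>y. v y t) differentiable at x \<and> (\<lambda>y. deriv (\<lambda>z. v z t) y) differentiable at x
       \<and> deriv (\<lambda>s. v x s) t = V\<^sub>t x t \<and> deriv (\<lambda>s. deriv (\<lambda>r. v x r) s) t = V\<^sub>t\<^sub>t x t
       \<and> deriv (\<lambda>y. deriv (\<lambda>z. v z t) y) x = V\<^sub>x\<^sub>x x t"
proof -
  have v\<^sub>t: "((\<lambda>s. v x s) has_real_derivative V\<^sub>t x s) (at s)" if "s > 0" for s
    by (rule has_field_derivative_transform_within_open[OF V\<^sub>t, of "{0<..}"]) (use that agree in auto)
  have "deriv (\<lambda>r. v x r) s = V\<^sub>t x s" if "s > 0" for s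
    using DERIV_imp_deriv[OF v\<^sub>t[OF that]] .
  then have v\<^sub>t\<^sub>t: "((\<lambda>s. deriv (\<lambda>r. v x r) s) has_real_derivative V\<^sub>t\<^sub>t x t) (at t)"
    by (intro has_field_derivative_transform_within_open[OF V\<^sub>t\<^sub>t, of "{0<..}"]) (use t in auto)
  have v_slice: "(\<lambda>y. v y t) = (\<lambda>y. V y t)"
    using agree t by auto
  have V\<^sub>x_deriv: "deriv (\<lambda>z. V z t) = (\<lambda>y. V\<^sub>x y t)"
    by (rule ext, rule DERIV_imp_deriv[OF V\<^sub>x])
  have real_differentiable: "f differentiable at z" if "(f has_real_derivative D) (at z)" for f D z
    using that by (meson differentiableI has_field_derivative_imp_has_derivative)
  have "((\<lambda>y. V y t) has_real_derivative V\<^sub>x x t) (at x)"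
       "((\<lambda>y. V\<^sub>x y t) has_real_derivative V\<^sub>x\<^sub>x x t) (at x)"
    by (rule V\<^sub>x V\<^sub>x\<^sub>x)+
  then show ?thesis
    using v\<^sub>t[OF t] v\<^sub>t\<^sub>t by (simp add: v_slice V\<^sub>x_deriv real_differentiable DERIV_imp_deriv)
qed

theorem theorem2p2:
  fixes c \<alpha> :: real and g :: "real \<Rightarrow> real" and w v :: "real \<Rightarrow> real \<Rightarrow> real"
  assumes c_pos: "c > 0" and alpha_pos: "\<alpha> > 0" and g_C2: "C2 g"
    and w_def: "\<And>x t. w x t = 1 / (2 * c) * integral {x - c * t .. x + c * t} g"
    and v_def: "\<And>x t. v x t = 2 / Beta \<alpha> (1/2) *
                   integral {0..1} (\<lambda>u. (1 - u\<^sup>2) powr (\<alpha> - 1) * w x (u * t))"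
  shows "(\<forall>x t. t > 0 \<longrightarrow>
            (\<lambda>s. v x s) differentiable at t \<and>
            (\<lambda>s. deriv (\<lambda>r. v x r) s) differentiable at t \<and>
            (\<lambda>y. v y t) differentiable at x \<and>
            (\<lambda>y. deriv (\<lambda>z. v z t) y) differentiable at x \<and>
            deriv (\<lambda>s. deriv (\<lambda>r. v x r) s) t + 2 * \<alpha> / t * deriv (\<lambda>s. v x s) t
              = c\<^sup>2 * deriv (\<lambda>y. deriv (\<lambda>z. v z t) y) x + 2 * g x / (t * Beta \<alpha> (1/2)))
       \<and> (\<forall>x. v x 0 = 0)
       \<and> (\<forall>x. ((\<lambda>t. v x t) has_real_derivative
                 Gamma (\<alpha> + 1/2) / (sqrt pi * Gamma (\<alpha> + 1)) * g x) (at 0 within {0..}))"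
proof -
  obtain g' where g': "\<And>y. (g has_real_derivative g' y) (at y)" and g'_cont: "continuous_on UNIV g'"
    using C2_first_derivative[OF g_C2] by blast
  have "continuous_on UNIV g"
    using g' by (meson DERIV_isCont continuous_at_imp_continuous_on)
  then obtain G where G: "\<And>y. (G has_real_derivative g y) (at y)"
    using continuous_antiderivative by blast
  have c: "c \<noteq> 0" using c_pos by simp
  note agree = epd_representation[OF c_pos alpha_pos G w_def v_def]
  note derivs = epd_solution_derivatives[OF alpha_pos c G g' g'_cont]
  \<comment> \<open>The initial velocity is a one-sided derivative, since \<open>v\<close> agrees with the closed form only for \<open>t \<ge> 0\<close>.\<close>
  have "((\<lambda>t. v x t) has_real_derivative
          even_mean c (\<lambda>u. u * euler_kernel \<alpha> u) g x 0 / Beta \<alpha> (1/2)) (at 0 within {0..})" for x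
    by (rule has_field_derivative_transform_within[OF has_field_derivative_at_within[OF derivs(1)], of 1])
       (auto simp: agree)
  then have "\<forall>x. ((\<lambda>t. v x t) has_real_derivative
                   Gamma (\<alpha> + 1/2) / (sqrt pi * Gamma (\<alpha> + 1)) * g x) (at 0 within {0..})"
    by (simp add: epd_initial_velocity[OF alpha_pos])
  moreover have "\<forall>x. v x 0 = 0"
    by (simp add: v_def w_def)
  ultimately show ?thesis
    using derivatives_of_agreeing_function[OF agree derivs] epd_solution_equation[OF alpha_pos c _ g' g'_cont]
    by auto
qed

end
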